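(* Let $(A,W)$ be a Pratt comonoid, $x_0\supseteq x_1\supseteq\cdots$ an $\omega$-indexed descending chain of elements of $W$, and $y_0\subseteq y_1\subseteq\cdots$ an $\omega$-indexed ascending chain of elements of $W$, such that either $\bigcap_{n\in\omega}x_n=\emptyset$ or $\bigcup_{n\in\omega}y_n=A$. Then $\bigcup_{n\in\omega}(x_n\cap y_n)\in W$.
   Context: A Pratt comonoid is a pair $(A,W)$ where $A$ is a set and $W$ is a set of subsets of $A$ such that (i) $\emptyset\in W$ and $A\in W$; (ii) whenever $C\subseteq A\times A$ is such that for every $a\in A$ both the $a$-th row $\{b\mid (a,b)\in C\}$ and the $a$-th column $\{b\mid (b,a)\in C\}$ belong to $W$ (a crossword over $W$), the diagonal $\{b\mid (b,b)\in C\}$ also belongs to $W$. *)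

theory Defs
  imports Main
begin

definition crossword :: "'a set \<Rightarrow> 'a set set \<Rightarrow> ('a \<times> 'a) set \<Rightarrow> bool" where
  "crossword A W C \<longleftrightarrow> C \<subseteq> A \<times> A \<and>
     (\<forall>a\<in>A. {b. (a, b) \<in> C} \<in> W \<and> {b. (b, a) \<in> C} \<in> W)"

definition pratt_comonoid :: "'a set \<Rightarrow> 'a set set \<Rightarrow> bool" where
  "pratt_comonoid A W \<longleftrightarrow> W \<subseteq> Pow A \<and> {} \<in> W \<and> A \<in> W \<and>
     (\<forall>C. crossword A W C \<longrightarrow> {b. (b, b) \<in> C} \<in> W)"

end

theory Submission
  imports Defs
begin

text \<open>The staircase relation relating a to b whenever a \<in> x n and b \<in> y n for a common n
  is a crossword: since x descends and y ascends, each row of it is empty, some y n, or all of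
  \<Union>n. y n (the last only for a \<in> \<Inter>n. x n), and each column is empty or some x n.
  The hypothesis on the chains rules out the one row that could fail to lie in W, and the
  diagonal of the staircase is \<Union>n. x n \<inter> y n.\<close>

lemma pratt_comonoid_diagonal_Int:
  assumes "pratt_comonoid A W"
    and "\<And>a. a \<in> A \<Longrightarrow> A \<inter> {b. (a, b) \<in> R} \<in> W"
    and "\<And>a. a \<in> A \<Longrightarrow> A \<inter> {b. (b, a) \<in> R} \<in> W"
  shows "A \<inter> {b. (b, b) \<in> R} \<in> W"
proof -
  have "crossword A W (R \<inter> A \<times> A)"
  proof -
    have "{b. (a, b) \<in> R \<inter> A \<times> A} = A \<inter> {b. (a, b) \<in> R}"
      and "{b. (b, a) \<in> R \<inter> A \<times> A} = A \<inter> {b. (b, a) \<in> R}" if "a \<in> A" for a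
      using that by auto
    then show ?thesis
      using assms(2,3) unfolding crossword_def by auto
  qed
  with assms(1) have "{b. (b, b) \<in> R \<inter> A \<times> A} \<in> W"
    unfolding pratt_comonoid_def by blast
  moreover have "{b. (b, b) \<in> R \<inter> A \<times> A} = A \<inter> {b. (b, b) \<in> R}"
    by auto
  ultimately show ?thesis
    by simp
qed

lemma mem_antimono_chain_cases:
  fixes x :: "nat \<Rightarrow> 'a set"
  assumes "antimono x"
  obtains "\<forall>n. a \<in> x n" | k where "\<forall>n. a \<in> x n \<longleftrightarrow> n < k"
proof (cases "\<exists>k. a \<notin> x k")
  case True
  define k where "k = (LEAST k. a \<notin> x k)"
  have "a \<notin> x k"
    unfolding k_def using True by (rule LeastI_ex)
  moreover have "a \<in> x n" if "n < k" for n
    using that not_less_Least unfolding k_def by blast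
  moreover have "x n \<subseteq> x k" if "k \<le> n" for n
    using assms that by (simp add: antimono_def)
  ultimately have "\<forall>n. a \<in> x n \<longleftrightarrow> n < k"
    by (meson not_less subsetD)
  then show ?thesis
    by (rule that(2))
qed (use that(1) in blast)

lemma mem_mono_chain_cases:
  fixes y :: "nat \<Rightarrow> 'a set"
  assumes "mono y"
  obtains "\<forall>n. a \<notin> y n" | m where "\<forall>n. a \<in> y n \<longleftrightarrow> m \<le> n"
proof -
  have "antimono (\<lambda>n. - y n)"
    using assms by (auto simp: antimono_def mono_def)
  then show ?thesis
  proof (cases rule: mem_antimono_chain_cases[where a = a])
    case 1
    then show ?thesis
      using that(1) by simp
  next
    case (2 k)
    then have "\<forall>n. a \<in> y n \<longleftrightarrow> k \<le> n"
      by (auto simp: not_less[symmetric])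
    then show ?thesis
      by (rule that(2))
  qed
qed

definition staircase :: "(nat \<Rightarrow> 'a set) \<Rightarrow> (nat \<Rightarrow> 'a set) \<Rightarrow> ('a \<times> 'a) set" where
  "staircase x y = {(a, b). \<exists>n. a \<in> x n \<and> b \<in> y n}"

lemma staircase_row_cases:
  assumes "antimono x" and "mono y"
  obtains "a \<in> (\<Inter>n. x n)" and "{b. (a, b) \<in> staircase x y} = (\<Union>n. y n)"
    | "{b. (a, b) \<in> staircase x y} = {}"
    | j where "{b. (a, b) \<in> staircase x y} = y j"
proof (cases rule: mem_antimono_chain_cases[OF assms(1), where a = a])
  case 1
  then show ?thesis
    using that(1) unfolding staircase_def by auto
next
  case (2 k)
  show ?thesis
  proof (cases k)
    case 0
    then show ?thesis
      using 2 that(2) unfolding staircase_def by auto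
  next
    case (Suc j)
    have "y n \<subseteq> y j" if "n \<le> j" for n
      using assms(2) that by (simp add: mono_def)
    then have "{b. (a, b) \<in> staircase x y} = y j"
      using 2 Suc unfolding staircase_def by (auto simp: less_Suc_eq_le)
    then show ?thesis
      by (rule that(3))
  qed
qed

lemma staircase_column_cases:
  assumes "antimono x" and "mono y"
  obtains "{b. (b, a) \<in> staircase x y} = {}"
    | m where "{b. (b, a) \<in> staircase x y} = x m"
proof (cases rule: mem_mono_chain_cases[OF assms(2), where a = a])
  case 1
  then show ?thesis
    using that(1) unfolding staircase_def by auto
next
  case (2 m)
  have "x n \<subseteq> x m" if "m \<le> n" for n
    using assms(1) that by (simp add: antimono_def)
  then have "{b. (b, a) \<in> staircase x y} = x m"
    using 2 unfolding staircase_def by blast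
  then show ?thesis
    by (rule that(2))
qed

theorem lemma7p2:
  fixes A :: "'a set" and W :: "'a set set" and x y :: "nat \<Rightarrow> 'a set"
  assumes "pratt_comonoid A W"
    and "\<And>n. x n \<in> W" and "\<And>n. x (Suc n) \<subseteq> x n"
    and "\<And>n. y n \<in> W" and "\<And>n. y n \<subseteq> y (Suc n)"
    and "(\<Inter>n. x n) = {} \<or> (\<Union>n. y n) = A"
  shows "(\<Union>n. x n \<inter> y n) \<in> W"
proof -
  have W: "W \<subseteq> Pow A" "{} \<in> W" "A \<in> W"
    using assms(1) unfolding pratt_comonoid_def by auto
  have in_A: "x n \<subseteq> A" "y n \<subseteq> A" for n
    using W(1) assms(2,4) by blast+
  have chains: "antimono x" "mono y"
    using assms(3,5) by (simp_all add: antimono_iff_le_Suc mono_iff_le_Suc)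
  have "A \<inter> {b. (b, b) \<in> staircase x y} \<in> W"
  proof (rule pratt_comonoid_diagonal_Int[OF assms(1)])
    fix a
    show "A \<inter> {b. (a, b) \<in> staircase x y} \<in> W"
      by (cases rule: staircase_row_cases[OF chains, where a = a])
        (use W in_A assms(4,6) in \<open>auto simp: Int_absorb1\<close>)
    show "A \<inter> {b. (b, a) \<in> staircase x y} \<in> W"
      by (cases rule: staircase_column_cases[OF chains, where a = a])
        (use W in_A assms(2) in \<open>auto simp: Int_absorb1\<close>)
  qed
  moreover have "A \<inter> {b. (b, b) \<in> staircase x y} = (\<Union>n. x n \<inter> y n)"
    using in_A unfolding staircase_def by blast
  ultimately show ?thesis
    by simp
qed

end
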